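(* Fix $C<1$. For every $\epsilon>0$ there are positive constants $D$ and $N$ such that \[ \mathbb{P}(\#\mathcal{E}_i\ge\epsilon n)\le D\frac{(\log n)^3}{n^2} \] for all $n\ge N$ and all $1\le i\le n$.
   Context: Let $C>0$ be a constant and $(\alpha_n)_{n\ge1}$ a sequence of nonnegative reals with $\alpha_n\to0$. For each $n$, consider the complete graph $K_n$ on vertex set $\{1,\dots,n\}$; each edge $e$ of $K_n$ is independently open with probability $p_n(e)$ and closed otherwise, where $\frac{C-\alpha_n}{n}\le p_n(e)\le\frac{C+\alpha_n}{n}$ for every edge $e$. Let $G$ be the resulting random graph of open edges, with probability measure $\mathbb{P}$. For a vertex $i$, $\mathcal{E}_i$ denotes the open component of $G$ containing $i$ (the set of vertices joined to $i$ by a path of open edges, together with $i$ itself), and $\#\mathcal{E}_i$ its number of vertices. $\log$ is the natural logarithm. *)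

theory Defs
  imports Complex_Main
begin

definition Kn_edges :: "nat \<Rightarrow> nat set set" where
  "Kn_edges n = {e. \<exists>i j. e = {i, j} \<and> i \<noteq> j \<and> i \<in> {1..n} \<and> j \<in> {1..n}}"

text \<open>Probability of a given set G of open edges when each edge e of K_n is
independently open with probability p e.\<close>
definition graph_prob :: "nat \<Rightarrow> (nat set \<Rightarrow> real) \<Rightarrow> nat set set \<Rightarrow> real" where
  "graph_prob n p G = (\<Prod>e\<in>Kn_edges n. if e \<in> G then p e else 1 - p e)"

definition rg_prob :: "nat \<Rightarrow> (nat set \<Rightarrow> real) \<Rightarrow> (nat set set \<Rightarrow> bool) \<Rightarrow> real" where
  "rg_prob n p A = (\<Sum>G\<in>{G. G \<subseteq> Kn_edges n \<and> A G}. graph_prob n p G)"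

definition open_comp :: "nat \<Rightarrow> nat set set \<Rightarrow> nat \<Rightarrow> nat set" where
  "open_comp n G i = {j \<in> {1..n}. (i, j) \<in> {(a, b). {a, b} \<in> G \<and> a \<noteq> b}\<^sup>*}"

end

theory Submission
  imports Defs
begin

text \<open>Explore the component of \<open>i\<close> one vertex at a time, revealing only the edges from the
current vertex to the still unexplored vertices: each step reveals at most \<open>n\<close> fresh edges, each
open with probability at most \<open>c/n\<close> with \<open>c < 1\<close>. For \<open>w, z > 1\<close> with
\<open>z exp (c (w - 1)) = w\<close>, the expectation of \<open>z ^ #explored * w ^ #active\<close> does not increase
along the exploration, so \<open>E z ^ #\<E>\<^sub>i \<le> w\<close>. Markov's inequality gives
\<open>P (#\<E>\<^sub>i \<ge> \<epsilon> n) \<le> w z ^ (-\<epsilon> n)\<close>, an exponentially small tail, far below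
\<open>(log n) ^ 3 / n ^ 2\<close>.\<close>

definition bernoulli_weight :: "'e set \<Rightarrow> ('e \<Rightarrow> real) \<Rightarrow> 'e set \<Rightarrow> real" where
  "bernoulli_weight E p G = (\<Prod>e\<in>E. if e \<in> G then p e else 1 - p e)"

definition bernoulli_expect :: "'e set \<Rightarrow> ('e \<Rightarrow> real) \<Rightarrow> ('e set \<Rightarrow> real) \<Rightarrow> real" where
  "bernoulli_expect E p f = (\<Sum>G\<in>Pow E. bernoulli_weight E p G * f G)"

lemma bernoulli_weight_Un:
  assumes "finite E" "E1 \<subseteq> E" "G1 \<subseteq> E1" "G2 \<subseteq> E - E1"
  shows "bernoulli_weight E p (G1 \<union> G2) = bernoulli_weight E1 p G1 * bernoulli_weight (E - E1) p G2"
proof -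
  have "bernoulli_weight E p (G1 \<union> G2) =
      (\<Prod>e\<in>E - E1. if e \<in> G1 \<union> G2 then p e else 1 - p e) *
      (\<Prod>e\<in>E1. if e \<in> G1 \<union> G2 then p e else 1 - p e)"
    unfolding bernoulli_weight_def by (rule prod.subset_diff[OF assms(2,1)])
  also have "\<dots> = bernoulli_weight (E - E1) p G2 * bernoulli_weight E1 p G1"
    unfolding bernoulli_weight_def using assms(3,4)
    by (intro arg_cong2[where f = "(*)"] prod.cong) auto
  finally show ?thesis by simp
qed

lemma bernoulli_expect_split:
  assumes fin: "finite E" and sub: "E1 \<subseteq> E"
  shows "bernoulli_expect E p f =
    bernoulli_expect E1 p (\<lambda>G1. bernoulli_expect (E - E1) p (\<lambda>G2. f (G1 \<union> G2)))"
proof -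
  let ?h = "\<lambda>(G1, G2). G1 \<union> G2"
  have inj: "inj_on ?h (Pow E1 \<times> Pow (E - E1))"
    by (rule inj_onI) auto
  have img: "?h ` (Pow E1 \<times> Pow (E - E1)) = Pow E"
  proof
    show "Pow E \<subseteq> ?h ` (Pow E1 \<times> Pow (E - E1))"
    proof
      fix G assume "G \<in> Pow E"
      then have "(G \<inter> E1, G - E1) \<in> Pow E1 \<times> Pow (E - E1)" "G = ?h (G \<inter> E1, G - E1)" by auto
      then show "G \<in> ?h ` (Pow E1 \<times> Pow (E - E1))" by blast
    qed
  qed (use sub in auto)
  have "bernoulli_expect E p f =
      (\<Sum>(G1, G2)\<in>Pow E1 \<times> Pow (E - E1). bernoulli_weight E p (G1 \<union> G2) * f (G1 \<union> G2))"
    unfolding bernoulli_expect_def img[symmetric] sum.reindex[OF inj] by (simp add: comp_def split_def)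
  also have "\<dots> = (\<Sum>G1\<in>Pow E1. \<Sum>G2\<in>Pow (E - E1).
      bernoulli_weight E1 p G1 * (bernoulli_weight (E - E1) p G2 * f (G1 \<union> G2)))"
    unfolding sum.cartesian_product
    by (rule sum.cong) (auto simp: bernoulli_weight_Un[OF fin sub])
  finally show ?thesis
    unfolding bernoulli_expect_def by (simp add: sum_distrib_left)
qed

lemma bernoulli_expect_cong:
  "(\<And>G. G \<subseteq> E \<Longrightarrow> f G = g G) \<Longrightarrow> bernoulli_expect E p f = bernoulli_expect E p g"
  unfolding bernoulli_expect_def by (rule sum.cong) auto

lemma bernoulli_expect_cmult:
  "bernoulli_expect E p (\<lambda>G. c * f G) = c * bernoulli_expect E p f"
  unfolding bernoulli_expect_def by (simp add: sum_distrib_left algebra_simps)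

lemma bernoulli_expect_mono:
  assumes "\<And>e. e \<in> E \<Longrightarrow> 0 \<le> p e \<and> p e \<le> 1" "\<And>G. G \<subseteq> E \<Longrightarrow> f G \<le> g G"
  shows "bernoulli_expect E p f \<le> bernoulli_expect E p g"
proof -
  have "0 \<le> bernoulli_weight E p G" for G
    unfolding bernoulli_weight_def using assms(1) by (intro prod_nonneg) auto
  then show ?thesis
    unfolding bernoulli_expect_def using assms(2) by (auto intro!: sum_mono mult_left_mono)
qed

lemma bernoulli_expect_prod:
  assumes "finite E"
  shows "bernoulli_expect E p (\<lambda>G. \<Prod>e\<in>G. g e) = (\<Prod>e\<in>E. 1 - p e + p e * g e)"
  using assms
proof (induction E rule: finite_induct)
  case empty
  then show ?case by (simp add: bernoulli_expect_def bernoulli_weight_def)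
next
  case (insert x F)
  have Pow_single: "Pow {x} = {{}, {x}}" by blast
  have "bernoulli_expect (insert x F) p (\<lambda>G. \<Prod>e\<in>G. g e) =
      bernoulli_expect {x} p (\<lambda>G1. bernoulli_expect F p (\<lambda>G2. \<Prod>e\<in>G1 \<union> G2. g e))"
    using bernoulli_expect_split[of "insert x F" "{x}"] insert by (simp add: insert_Diff_if)
  also have "\<dots> = bernoulli_expect {x} p
      (\<lambda>G1. (\<Prod>e\<in>G1. g e) * bernoulli_expect F p (\<lambda>G2. \<Prod>e\<in>G2. g e))"
  proof (intro bernoulli_expect_cong)
    fix G1 assume "G1 \<subseteq> {x}"
    then have "bernoulli_expect F p (\<lambda>G2. \<Prod>e\<in>G1 \<union> G2. g e) =
        bernoulli_expect F p (\<lambda>G2. (\<Prod>e\<in>G1. g e) * (\<Prod>e\<in>G2. g e))"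
      using insert by (intro bernoulli_expect_cong prod.union_disjoint)
        (auto intro: finite_subset)
    then show "bernoulli_expect F p (\<lambda>G2. \<Prod>e\<in>G1 \<union> G2. g e) =
        (\<Prod>e\<in>G1. g e) * bernoulli_expect F p (\<lambda>G2. \<Prod>e\<in>G2. g e)"
      by (simp add: bernoulli_expect_cmult)
  qed
  finally show ?case
    using insert by (simp add: bernoulli_expect_def bernoulli_weight_def Pow_single algebra_simps)
qed

lemma bernoulli_expect_const: "finite E \<Longrightarrow> bernoulli_expect E p (\<lambda>G. c) = c"
  using bernoulli_expect_prod[of E p "\<lambda>_. 1"] bernoulli_expect_cmult[of E p c "\<lambda>_. 1"] by simp

lemma bernoulli_expect_power_card_le:
  assumes "finite E" and p: "\<And>e. e \<in> E \<Longrightarrow> 0 \<le> p e \<and> p e \<le> q" and "1 \<le> w"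
  shows "bernoulli_expect E p (\<lambda>G. w ^ card G) \<le> (1 + q * (w - 1)) ^ card E"
proof -
  have "bernoulli_expect E p (\<lambda>G. w ^ card G) = (\<Prod>e\<in>E. 1 + p e * (w - 1))"
    using bernoulli_expect_prod[OF assms(1), of p "\<lambda>_. w"]
    by (simp add: algebra_simps)
  also have "\<dots> \<le> (\<Prod>e\<in>E. 1 + q * (w - 1))"
    using p \<open>1 \<le> w\<close> by (intro prod_mono) (auto intro: mult_right_mono)
  finally show ?thesis by simp
qed

text \<open>The vertex chosen next depends only on \<open>A \<inter> V\<close>, not on \<open>G\<close>, and a step inspects only
the edges from it to \<open>V - {a}\<close>; hence different steps reveal disjoint, independent edge sets.
The fuel \<open>m\<close> must be at least \<open>card V\<close> for the exploration to exhaust the component.\<close>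

primrec explore :: "nat \<Rightarrow> 'a set \<Rightarrow> 'a set \<Rightarrow> 'a set set \<Rightarrow> 'a set" where
  "explore 0 V A G = {}"
| "explore (Suc m) V A G = (if A \<inter> V = {} then {} else
    (let a = (SOME a. a \<in> A \<inter> V) in
      insert a (explore m (V - {a}) ((A \<inter> V - {a}) \<union> {v \<in> V - {a}. {a, v} \<in> G}) G)))"

lemma explore_SucE:
  assumes "A \<inter> V \<noteq> {}"
  obtains a where "a \<in> A \<inter> V" "\<And>G. explore (Suc m) V A G =
     insert a (explore m (V - {a}) ((A \<inter> V - {a}) \<union> {v \<in> V - {a}. {a, v} \<in> G}) G)"
proof
  show "(SOME a. a \<in> A \<inter> V) \<in> A \<inter> V"
    using assms by (metis ex_in_conv someI_ex)
qed (simp add: assms Let_def)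

lemma explore_subset: "explore m V A G \<subseteq> V"
proof (induction m arbitrary: V A)
  case (Suc m)
  show ?case
  proof (cases "A \<inter> V = {}")
    case False
    then obtain a where "a \<in> A \<inter> V" and step: "\<And>G. explore (Suc m) V A G =
        insert a (explore m (V - {a}) ((A \<inter> V - {a}) \<union> {v \<in> V - {a}. {a, v} \<in> G}) G)"
      using explore_SucE[OF False, where m = m] by blast
    then show ?thesis using Suc.IH[of "V - {a}"] by auto
  qed simp
qed simp

lemma explore_closed:
  assumes "finite V" "card V \<le> m"
  shows "A \<inter> V \<subseteq> explore m V A G \<and>
    (\<forall>x\<in>explore m V A G. \<forall>y\<in>V. {x, y} \<in> G \<and> x \<noteq> y \<longrightarrow> y \<in> explore m V A G)"
  using assms
proof (induction m arbitrary: V A)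
  case (Suc m)
  show ?case
  proof (cases "A \<inter> V = {}")
    case False
    then obtain a where a: "a \<in> A \<inter> V" and step: "\<And>G. explore (Suc m) V A G =
        insert a (explore m (V - {a}) ((A \<inter> V - {a}) \<union> {v \<in> V - {a}. {a, v} \<in> G}) G)"
      using explore_SucE[OF False, where m = m] by blast
    define A' where "A' = (A \<inter> V - {a}) \<union> {v \<in> V - {a}. {a, v} \<in> G}"
    define X' where "X' = explore m (V - {a}) A' G"
    have "card (V - {a}) \<le> m" using Suc.prems a by auto
    then have IH: "A' \<inter> (V - {a}) \<subseteq> X'"
        "\<forall>x\<in>X'. \<forall>y\<in>V - {a}. {x, y} \<in> G \<and> x \<noteq> y \<longrightarrow> y \<in> X'"
      using Suc.IH[of "V - {a}" A'] Suc.prems unfolding X'_def by auto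
    have "y \<in> insert a X'" if "x \<in> insert a X'" "y \<in> V" "{x, y} \<in> G" "x \<noteq> y" for x y
      using that IH unfolding A'_def by (cases "x = a") auto
    moreover have "A \<inter> V \<subseteq> insert a X'" using IH(1) unfolding A'_def by auto
    ultimately show ?thesis unfolding step A'_def[symmetric] X'_def[symmetric] by blast
  qed simp
qed simp

lemma explore_cong:
  assumes "\<And>x y. x \<in> V \<Longrightarrow> y \<in> V \<Longrightarrow> {x, y} \<in> G \<longleftrightarrow> {x, y} \<in> G'"
  shows "explore m V A G = explore m V A G'"
  using assms
proof (induction m arbitrary: V A)
  case (Suc m)
  show ?case
  proof (cases "A \<inter> V = {}")
    case False
    then obtain a where a: "a \<in> A \<inter> V" and step: "\<And>G. explore (Suc m) V A G =
        insert a (explore m (V - {a}) ((A \<inter> V - {a}) \<union> {v \<in> V - {a}. {a, v} \<in> G}) G)"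
      using explore_SucE[OF False, where m = m] by blast
    have "{v \<in> V - {a}. {a, v} \<in> G} = {v \<in> V - {a}. {a, v} \<in> G'}"
      using Suc.prems a by auto
    moreover have "explore m (V - {a}) B G = explore m (V - {a}) B G'" for B
      by (rule Suc.IH) (use Suc.prems in auto)
    ultimately show ?thesis unfolding step by simp
  qed simp
qed simp

lemma bernoulli_expect_explore_split:
  assumes fin: "finite E" and a: "a \<notin> V"
  defines "Ea \<equiv> E \<inter> (\<lambda>v. {a, v}) ` V"
  shows "bernoulli_expect E p (\<lambda>G. f (explore m V (B \<union> {v \<in> V. {a, v} \<in> G}) G)) =
    bernoulli_expect Ea p (\<lambda>G1. bernoulli_expect (E - Ea) p
      (\<lambda>G2. f (explore m V (B \<union> {v \<in> V. {a, v} \<in> G1}) G2)))"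
proof -
  have "bernoulli_expect E p (\<lambda>G. f (explore m V (B \<union> {v \<in> V. {a, v} \<in> G}) G)) =
    bernoulli_expect Ea p (\<lambda>G1. bernoulli_expect (E - Ea) p
      (\<lambda>G2. f (explore m V (B \<union> {v \<in> V. {a, v} \<in> G1 \<union> G2}) (G1 \<union> G2))))"
    unfolding Ea_def by (rule bernoulli_expect_split[OF fin]) auto
  also have "\<dots> = bernoulli_expect Ea p (\<lambda>G1. bernoulli_expect (E - Ea) p
      (\<lambda>G2. f (explore m V (B \<union> {v \<in> V. {a, v} \<in> G1}) G2)))"
  proof (intro bernoulli_expect_cong)
    fix G1 G2 assume G1: "G1 \<subseteq> Ea" and G2: "G2 \<subseteq> E - Ea"
    have "{v \<in> V. {a, v} \<in> G1 \<union> G2} = {v \<in> V. {a, v} \<in> G1}"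
      using G2 unfolding Ea_def by auto
    moreover have "explore m V B' (G1 \<union> G2) = explore m V B' G2" for B'
    proof (rule explore_cong)
      fix x y assume "x \<in> V" "y \<in> V"
      then have "{x, y} \<notin> G1" using G1 a unfolding Ea_def by (auto simp: doubleton_eq_iff)
      then show "{x, y} \<in> G1 \<union> G2 \<longleftrightarrow> {x, y} \<in> G2" by auto
    qed
    ultimately show "f (explore m V (B \<union> {v \<in> V. {a, v} \<in> G1 \<union> G2}) (G1 \<union> G2)) =
        f (explore m V (B \<union> {v \<in> V. {a, v} \<in> G1}) G2)"
      by simp
  qed
  finally show ?thesis .
qed

lemma card_activated_le:
  assumes "finite V" "a \<in> A \<inter> V" "finite G"
  shows "card ((A \<inter> V - {a}) \<union> {v \<in> V - {a}. {a, v} \<in> G}) \<le> card (A \<inter> V) - 1 + card G"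
proof -
  define N where "N = {v \<in> V - {a}. {a, v} \<in> G}"
  have "card N \<le> card G"
    by (rule card_inj_on_le[where f = "\<lambda>v. {a, v}"])
      (use assms(3) in \<open>auto simp: N_def inj_on_def doubleton_eq_iff\<close>)
  moreover have "card (A \<inter> V - {a}) = card (A \<inter> V) - 1"
    using assms(1,2) by simp
  ultimately show ?thesis
    using card_Un_le[of "A \<inter> V - {a}" N] unfolding N_def by linarith
qed

lemma bernoulli_expect_activated_le:
  assumes "finite E" and p: "\<And>e. e \<in> E \<Longrightarrow> 0 \<le> p e \<and> p e \<le> 1 \<and> p e \<le> q" and q: "0 \<le> q"
    and w: "1 \<le> w" and V: "finite V" "card V \<le> n" and a: "a \<in> A \<inter> V"
  shows "bernoulli_expect (E \<inter> (\<lambda>v. {a, v}) ` (V - {a})) p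
      (\<lambda>G. w ^ card ((A \<inter> V - {a}) \<union> {v \<in> V - {a}. {a, v} \<in> G}))
    \<le> w ^ (card (A \<inter> V) - 1) * (1 + q * (w - 1)) ^ n"
proof -
  define Ea where "Ea = E \<inter> (\<lambda>v. {a, v}) ` (V - {a})"
  have finEa: "finite Ea" unfolding Ea_def using \<open>finite E\<close> by simp
  have "card Ea \<le> card ((\<lambda>v. {a, v}) ` (V - {a}))"
    unfolding Ea_def using V by (intro card_mono) auto
  also have "\<dots> \<le> card (V - {a})" using V by (intro card_image_le) simp
  also have "\<dots> \<le> card V" using V by (intro card_mono) auto
  finally have card_Ea: "card Ea \<le> n" using V by linarith
  have "bernoulli_expect Ea p (\<lambda>G. w ^ card ((A \<inter> V - {a}) \<union> {v \<in> V - {a}. {a, v} \<in> G}))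
      \<le> bernoulli_expect Ea p (\<lambda>G. w ^ (card (A \<inter> V) - 1) * w ^ card G)"
  proof (rule bernoulli_expect_mono)
    fix G assume "G \<subseteq> Ea"
    then have "finite G" using finEa by (rule finite_subset)
    then have "w ^ card ((A \<inter> V - {a}) \<union> {v \<in> V - {a}. {a, v} \<in> G})
        \<le> w ^ (card (A \<inter> V) - 1 + card G)"
      by (intro power_increasing[OF _ w] card_activated_le[OF V(1) a])
    then show "w ^ card ((A \<inter> V - {a}) \<union> {v \<in> V - {a}. {a, v} \<in> G})
        \<le> w ^ (card (A \<inter> V) - 1) * w ^ card G"
      by (simp add: power_add)
  qed (use p in \<open>auto simp: Ea_def\<close>)
  also have "\<dots> \<le> w ^ (card (A \<inter> V) - 1) * (1 + q * (w - 1)) ^ card Ea"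
    unfolding bernoulli_expect_cmult using p w
    by (intro mult_left_mono bernoulli_expect_power_card_le finEa) (auto simp: Ea_def)
  also have "\<dots> \<le> w ^ (card (A \<inter> V) - 1) * (1 + q * (w - 1)) ^ n"
    using q w card_Ea by (intro mult_left_mono power_increasing) auto
  finally show ?thesis unfolding Ea_def .
qed

lemma explore_moment_bound:
  fixes E :: "'a set set"
  assumes "finite E" and "\<And>e. e \<in> E \<Longrightarrow> 0 \<le> p e \<and> p e \<le> 1 \<and> p e \<le> q" and q: "0 \<le> q"
    and z: "1 \<le> z" and w: "1 \<le> w" and drift: "z * (1 + q * (w - 1)) ^ n \<le> w"
    and "finite V" "card V \<le> n"
  shows "bernoulli_expect E p (\<lambda>G. z ^ card (explore m V A G)) \<le> w ^ card (A \<inter> V)"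
  using assms(1,2,7,8)
proof (induction m arbitrary: V A E)
  case 0
  then show ?case using w by (simp add: bernoulli_expect_const)
next
  case (Suc m)
  note finE = Suc.prems(1) and p = Suc.prems(2) and V = Suc.prems(3,4)
  show ?case
  proof (cases "A \<inter> V = {}")
    case True
    then show ?thesis using finE w by (simp add: bernoulli_expect_const)
  next
    case False
    then obtain a where a: "a \<in> A \<inter> V" and step: "\<And>G. explore (Suc m) V A G =
        insert a (explore m (V - {a}) ((A \<inter> V - {a}) \<union> {v \<in> V - {a}. {a, v} \<in> G}) G)"
      using explore_SucE[OF False, where m = m] by blast
    define Ea where "Ea = E \<inter> (\<lambda>v. {a, v}) ` (V - {a})"
    define act where "act G = (A \<inter> V - {a}) \<union> {v \<in> V - {a}. {a, v} \<in> G}" for G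
    have c: "1 \<le> card (A \<inter> V)" using a V by (auto simp: Suc_le_eq card_gt_0_iff)
    have card_V': "card (V - {a}) < card V" using V a by (intro card_Diff1_less) auto
    have "bernoulli_expect E p (\<lambda>G. z ^ card (explore (Suc m) V A G)) \<le>
        bernoulli_expect E p (\<lambda>G. z * z ^ card (explore m (V - {a}) (act G) G))"
    proof (rule bernoulli_expect_mono)
      fix G
      have "finite (explore m (V - {a}) (act G) G)"
        using V by (intro finite_subset[OF explore_subset]) simp
      then have "card (explore (Suc m) V A G) \<le> Suc (card (explore m (V - {a}) (act G) G))"
        unfolding step act_def by (simp add: card_insert_if)
      then have "z ^ card (explore (Suc m) V A G) \<le> z ^ Suc (card (explore m (V - {a}) (act G) G))"
        by (rule power_increasing[OF _ z])
      then show "z ^ card (explore (Suc m) V A G) \<le> z * z ^ card (explore m (V - {a}) (act G) G)"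
        by simp
    qed (use p in auto)
    also have "\<dots> = z * bernoulli_expect Ea p (\<lambda>G1.
        bernoulli_expect (E - Ea) p (\<lambda>G2. z ^ card (explore m (V - {a}) (act G1) G2)))"
      unfolding bernoulli_expect_cmult act_def Ea_def
      by (rule arg_cong[where f = "(*) z"], rule bernoulli_expect_explore_split[OF finE]) simp
    also have "\<dots> \<le> z * bernoulli_expect Ea p (\<lambda>G1. w ^ card (act G1))"
    proof (intro mult_left_mono bernoulli_expect_mono)
      fix G1
      have "act G1 \<inter> (V - {a}) = act G1" by (auto simp: act_def)
      then show "bernoulli_expect (E - Ea) p (\<lambda>G2. z ^ card (explore m (V - {a}) (act G1) G2))
          \<le> w ^ card (act G1)"
        using Suc.IH[of "E - Ea" "V - {a}" "act G1"] finE p V card_V' by simp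
    qed (use p z in \<open>auto simp: Ea_def\<close>)
    also have "\<dots> \<le> z * (w ^ (card (A \<inter> V) - 1) * (1 + q * (w - 1)) ^ n)"
      unfolding Ea_def act_def using finE p q w V a z
      by (intro mult_left_mono bernoulli_expect_activated_le) auto
    also have "\<dots> \<le> w ^ (card (A \<inter> V) - 1) * w"
      using drift w by (simp add: mult.left_commute mult_left_mono)
    also have "\<dots> = w ^ card (A \<inter> V)" using c by (simp flip: power_Suc2)
    finally show ?thesis .
  qed
qed

lemma finite_Kn_edges: "finite (Kn_edges n)"
proof (rule finite_subset)
  show "Kn_edges n \<subseteq> Pow {1..n}" unfolding Kn_edges_def by auto
qed simp

lemma rg_prob_eq_bernoulli_expect:
  "rg_prob n p P = bernoulli_expect (Kn_edges n) p (\<lambda>G. if P G then 1 else 0)"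
proof -
  have "{G. G \<subseteq> Kn_edges n \<and> P G} = {G \<in> Pow (Kn_edges n). P G}" by auto
  then have "rg_prob n p P = (\<Sum>G\<in>Pow (Kn_edges n). if P G then graph_prob n p G else 0)"
    unfolding rg_prob_def by (simp only: sum.inter_filter[OF finite_Pow_iff[THEN iffD2, OF finite_Kn_edges]])
  then show ?thesis
    unfolding bernoulli_expect_def graph_prob_def bernoulli_weight_def by (simp add: if_distrib cong: if_cong)
qed

lemma open_comp_subset_explore:
  assumes G: "G \<subseteq> Kn_edges n" and i: "i \<in> {1..n}"
  shows "open_comp n G i \<subseteq> explore n {1..n} {i} G"
proof
  fix j assume "j \<in> open_comp n G i"
  then have "(i, j) \<in> {(a, b). {a, b} \<in> G \<and> a \<noteq> b}\<^sup>*" unfolding open_comp_def by auto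
  then show "j \<in> explore n {1..n} {i} G"
  proof (induction rule: rtrancl_induct)
    case base
    then show ?case using explore_closed[of "{1..n}" n "{i}" G] i by auto
  next
    case (step y z)
    then have "{y, z} \<in> Kn_edges n" "y \<noteq> z" using G by auto
    then have "z \<in> {1..n}" unfolding Kn_edges_def by (auto simp: doubleton_eq_iff)
    then show ?case using explore_closed[of "{1..n}" n "{i}" G] step by auto
  qed
qed

lemma open_comp_tail_bound:
  assumes p: "\<And>e. e \<in> Kn_edges n \<Longrightarrow> 0 \<le> p e \<and> p e \<le> 1 \<and> p e \<le> c / real n"
    and c: "0 \<le> c" and z: "1 < z" and w: "1 \<le> w" and zw: "z * exp (c * (w - 1)) \<le> w"
    and i: "i \<in> {1..n}"
  shows "rg_prob n p (\<lambda>G. x \<le> real (card (open_comp n G i))) \<le> w / z powr x"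
proof -
  let ?X = "\<lambda>G. explore n {1..n} {i} G"
  have drift: "z * (1 + c / real n * (w - 1)) ^ n \<le> w"
  proof -
    have "(1 + c / real n * (w - 1)) ^ n \<le> exp (c / real n * (w - 1)) ^ n"
      using c w by (intro power_mono) (auto simp: add.commute exp_ge_add_one_self)
    also have "\<dots> = exp (real n * (c / real n) * (w - 1))"
      by (simp flip: exp_of_nat_mult add: mult.assoc)
    also have "\<dots> \<le> exp (c * (w - 1))"
      using c w by (cases "n = 0") auto
    finally have "z * (1 + c / real n * (w - 1)) ^ n \<le> z * exp (c * (w - 1))"
      using z by (intro mult_left_mono) auto
    with zw show ?thesis by linarith
  qed
  have "bernoulli_expect (Kn_edges n) p (\<lambda>G. z ^ card (?X G)) \<le> w ^ card ({i} \<inter> {1..n})"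
    using p c z w drift by (intro explore_moment_bound[where q = "c / real n"] finite_Kn_edges) auto
  also have "\<dots> = w" using i by simp
  finally have moment: "bernoulli_expect (Kn_edges n) p (\<lambda>G. z ^ card (?X G)) \<le> w" .
  have markov: "(if x \<le> real (card (open_comp n G i)) then 1 else 0) \<le> z ^ card (?X G) / z powr x"
    if "G \<subseteq> Kn_edges n" for G
  proof (cases "x \<le> real (card (open_comp n G i))")
    case True
    have "card (open_comp n G i) \<le> card (?X G)"
      using open_comp_subset_explore[OF that i]
      by (intro card_mono finite_subset[OF explore_subset]) auto
    with True have "z powr x \<le> z powr real (card (?X G))"
      using z by (intro powr_mono) auto
    then show ?thesis using True z by (simp add: powr_realpow)
  qed (use z in simp)
  have "rg_prob n p (\<lambda>G. x \<le> real (card (open_comp n G i)))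
      \<le> bernoulli_expect (Kn_edges n) p (\<lambda>G. z ^ card (?X G) / z powr x)"
    unfolding rg_prob_eq_bernoulli_expect using p markov by (intro bernoulli_expect_mono) auto
  also have "\<dots> = bernoulli_expect (Kn_edges n) p (\<lambda>G. z ^ card (?X G)) / z powr x"
    using bernoulli_expect_cmult[of _ p "1 / z powr x"] by (simp add: mult.commute)
  also have "\<dots> \<le> w / z powr x" using moment z by (simp add: divide_right_mono)
  finally show ?thesis .
qed

lemma exists_moment_parameters:
  fixes c :: real
  assumes "0 \<le> c" "c < 1"
  obtains w z :: real where "1 < w" "1 < z" "z * exp (c * (w - 1)) = w"
proof -
  define w where "w = 2 / (1 + c)"
  have w: "1 < w" and cw: "c * w < 1"
    unfolding w_def using assms by (simp_all add: field_simps)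
  have "c * w * (w - 1) < 1 * (w - 1)"
    using cw w by (intro mult_strict_right_mono) auto
  then have "c * (w - 1) < 1 - 1 / w"
    using w by (simp add: field_simps)
  also have "1 - 1 / w \<le> ln w"
    using ln_le_minus_one[of "1 / w"] w by (simp add: ln_div)
  finally have "exp (c * (w - 1)) < w"
    using w by (metis exp_less_cancel_iff exp_ln less_trans zero_less_one)
  then show thesis
    using that[of w "w / exp (c * (w - 1))"] w by simp
qed

lemma inverse_exp_le_ln_cube_over_square:
  fixes a x :: real
  assumes a: "0 < a" and x: "exp 1 \<le> x"
  shows "1 / exp (a * x) \<le> 27 / a ^ 3 * ln x ^ 3 / x ^ 2"
proof -
  have x1: "1 \<le> x" using x exp_ge_add_one_self[of 1] by linarith
  have lnx: "1 \<le> ln x ^ 3" using x x1 by (simp add: ln_ge_iff)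
  have "a * x / 3 \<le> exp (a * x / 3)"
    using exp_ge_add_one_self[of "a * x / 3"] by linarith
  then have "(a * x / 3) ^ 3 \<le> exp (a * x / 3) ^ 3"
    using a x1 by (intro power_mono) auto
  also have "\<dots> = exp (a * x)" by (simp flip: exp_of_nat_mult)
  finally have "1 / exp (a * x) \<le> 27 / a ^ 3 / x ^ 3"
    using a x1 by (simp add: field_simps power_mult_distrib)
  also have "\<dots> \<le> 27 / a ^ 3 / x ^ 2"
    using a x1 by (intro divide_left_mono power_increasing) auto
  also have "\<dots> \<le> 27 / a ^ 3 * ln x ^ 3 / x ^ 2"
    using mult_left_mono[of 1 "ln x ^ 3" "27 / a ^ 3"] a lnx by (intro divide_right_mono) auto
  finally show ?thesis .
qed

theorem lemma7:
  fixes C :: real and \<alpha> :: "nat \<Rightarrow> real" and p :: "nat \<Rightarrow> nat set \<Rightarrow> real"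
  assumes C_pos: "C > 0" and C_lt1: "C < 1"
    and alpha_nonneg: "\<And>n. \<alpha> n \<ge> 0"
    and alpha_lim: "\<alpha> \<longlonglongrightarrow> 0"
    and p_prob: "\<And>n e. e \<in> Kn_edges n \<Longrightarrow> 0 \<le> p n e \<and> p n e \<le> 1"
    and p_lower: "\<And>n e. e \<in> Kn_edges n \<Longrightarrow> (C - \<alpha> n) / real n \<le> p n e"
    and p_upper: "\<And>n e. e \<in> Kn_edges n \<Longrightarrow> p n e \<le> (C + \<alpha> n) / real n"
  shows "\<forall>\<epsilon>>0. \<exists>D>0. \<exists>N::nat. N > 0 \<and> (\<forall>n\<ge>N. \<forall>i\<in>{1..n}.
           rg_prob n (p n) (\<lambda>G. real (card (open_comp n G i)) \<ge> \<epsilon> * real n)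
             \<le> D * (ln (real n))^3 / (real n)^2)"
proof (intro allI impI)
  fix \<epsilon> :: real assume \<epsilon>: "\<epsilon> > 0"
  define c where "c = (1 + C) / 2"
  obtain w z where w: "1 < w" and z: "1 < z" and zw: "z * exp (c * (w - 1)) = w"
    using exists_moment_parameters[of c] C_pos C_lt1 unfolding c_def by auto
  define a where "a = ln z * \<epsilon>"
  have a: "0 < a" unfolding a_def using z \<epsilon> by simp
  obtain N0 where N0: "\<And>n. n \<ge> N0 \<Longrightarrow> \<alpha> n < (1 - C) / 2"
    using order_tendstoD(2)[OF alpha_lim, of "(1 - C) / 2"] C_lt1
    by (auto simp: eventually_sequentially)
  have "rg_prob n (p n) (\<lambda>G. real (card (open_comp n G i)) \<ge> \<epsilon> * real n)
      \<le> 27 * w / a ^ 3 * ln (real n) ^ 3 / real n ^ 2"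
    if n: "max N0 3 \<le> n" and i: "i \<in> {1..n}" for n i
  proof -
    have "C + \<alpha> n \<le> c" using N0[of n] n unfolding c_def by auto
    then have "p n e \<le> c / real n" if "e \<in> Kn_edges n" for e
      using p_upper[OF that] by (meson divide_right_mono of_nat_0_le_iff order_trans)
    then have "rg_prob n (p n) (\<lambda>G. real (card (open_comp n G i)) \<ge> \<epsilon> * real n)
        \<le> w / z powr (\<epsilon> * real n)"
      using p_prob z w zw i C_pos by (intro open_comp_tail_bound[where c = c]) (auto simp: c_def)
    also have "\<dots> = w * (1 / exp (a * real n))"
      using z by (simp add: powr_def a_def mult_ac)
    also have "\<dots> \<le> w * (27 / a ^ 3 * ln (real n) ^ 3 / real n ^ 2)"
      using w n exp_le by (intro mult_left_mono inverse_exp_le_ln_cube_over_square a) auto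
    finally show ?thesis by (simp add: mult_ac)
  qed
  then show "\<exists>D>0. \<exists>N::nat. N > 0 \<and> (\<forall>n\<ge>N. \<forall>i\<in>{1..n}.
           rg_prob n (p n) (\<lambda>G. real (card (open_comp n G i)) \<ge> \<epsilon> * real n)
             \<le> D * (ln (real n))^3 / (real n)^2)"
    using w a by (intro exI[of _ "27 * w / a ^ 3"] conjI exI[of _ "max N0 3"]) auto
qed

end
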